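(* Every $P$-faithful real quadratic form $f$ on $\mathbb R^n$ is antimonotonous.
   Context: $P_n=\{x\in\mathbb R^n:x_i>0,\ \sum x_i=1\}$, $\overline P_n=\{x: x_i\ge0,\ \sum x_i=1\}$. A continuous $f$ is $P$-faithful if $\min_{\overline P_n}f>0$ and this minimum is not attained on $\overline P_n\setminus P_n$. $H_n=\{x:\sum x_i=0\}$; $C(f)$ is the set of $h\in H_n\setminus\{0\}$ such that either $\partial f/\partial x_i(h)\le 0$ for all $i$ or $\partial f/\partial x_i(h)\ge0$ for all $i$. $f$ is antimonotonous if $C(f)=\varnothing$. *)

theory Defs
  imports "HOL-Analysis.Analysis"
begin

definition quadratic_form :: "(real ^ 'n \<Rightarrow> real) \<Rightarrow> bool" where
  "quadratic_form f \<longleftrightarrow> (\<exists>A :: real ^ 'n ^ 'n. \<forall>x. f x = x \<bullet> (A *v x))"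

definition open_simplex :: "(real ^ 'n) set" where
  "open_simplex = {x. (\<forall>i. 0 < x $ i) \<and> (\<Sum>i\<in>UNIV. x $ i) = 1}"

definition closed_simplex :: "(real ^ 'n) set" where
  "closed_simplex = {x. (\<forall>i. 0 \<le> x $ i) \<and> (\<Sum>i\<in>UNIV. x $ i) = 1}"

definition P_faithful :: "(real ^ 'n \<Rightarrow> real) \<Rightarrow> bool" where
  "P_faithful f \<longleftrightarrow> continuous_on UNIV f \<and>
     (\<exists>x0\<in>closed_simplex. (\<forall>x\<in>closed_simplex. f x0 \<le> f x) \<and> 0 < f x0 \<and>
          (\<forall>x\<in>closed_simplex - open_simplex. f x0 < f x))"

definition H_plane :: "(real ^ 'n) set" where
  "H_plane = {x. (\<Sum>i\<in>UNIV. x $ i) = 0}"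

definition partial_deriv :: "(real ^ 'n \<Rightarrow> real) \<Rightarrow> 'n \<Rightarrow> real ^ 'n \<Rightarrow> real" where
  "partial_deriv f i h = frechet_derivative f (at h) (axis i 1)"

definition C_set :: "(real ^ 'n \<Rightarrow> real) \<Rightarrow> (real ^ 'n) set" where
  "C_set f = {h \<in> H_plane - {0}. (\<forall>i. partial_deriv f i h \<le> 0) \<or> (\<forall>i. partial_deriv f i h \<ge> 0)}"

definition antimonotonous :: "(real ^ 'n \<Rightarrow> real) \<Rightarrow> bool" where
  "antimonotonous f \<longleftrightarrow> C_set f = {}"

end

theory Submission
  imports Defs
begin

text \<open>
  Let \<open>f x = x \<bullet> (A *v x)\<close> and let \<open>x\<^sub>0\<close> be the minimiser of \<open>f\<close> on the closed simplex,
  which lies in the open simplex.  The gradient of \<open>f\<close> at \<open>h\<close> is \<open>c = (A + A\<^sup>T) h\<close>, and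
  \<open>f (x\<^sub>0 + t h) = f x\<^sub>0 + t (x\<^sub>0 \<bullet> c) + t\<^sup>2 f h\<close>.  For \<open>h \<in> H\<^sub>n\<close> this line stays in the simplex
  for small \<open>|t|\<close>, so minimality forces \<open>x\<^sub>0 \<bullet> c = 0\<close>.  If \<open>c \<ge> 0\<close> componentwise, positivity
  of \<open>x\<^sub>0\<close> then gives \<open>c = 0\<close>, hence \<open>f h = (h \<bullet> c) / 2 = 0\<close>: \<open>f\<close> is constant on the whole
  line, which leaves the simplex through a boundary point where \<open>f\<close> would have to be
  strictly larger.  The case \<open>c \<le> 0\<close> is the case \<open>c \<ge> 0\<close> for \<open>-h\<close>.
\<close>

definition qf_gradient :: "real ^ 'n ^ 'n \<Rightarrow> real ^ 'n \<Rightarrow> real ^ 'n" where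
  "qf_gradient A h = (A + transpose A) *v h"

lemma inner_vector_matrix_mult: "(x :: real ^ 'n) \<bullet> (y v* A) = y \<bullet> (A *v x)"
  by (metis dot_lmul_matrix inner_commute)

lemma partial_deriv_quadratic_form:
  fixes A :: "real ^ 'n ^ 'n"
  assumes "\<And>x. f x = x \<bullet> (A *v x)"
  shows "partial_deriv f i h = qf_gradient A h $ i"
proof -
  have "(f has_derivative (\<lambda>v. h \<bullet> (A *v v) + v \<bullet> (A *v h))) (at h)"
    unfolding assms[abs_def]
    by (rule has_derivative_inner[OF has_derivative_ident])
       (simp add: bounded_linear_imp_has_derivative)
  then have "partial_deriv f i h = h \<bullet> (A *v axis i 1) + axis i 1 \<bullet> (A *v h)"
    unfolding partial_deriv_def by (metis frechet_derivative_at)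
  also have "h \<bullet> (A *v axis i 1) = axis i 1 \<bullet> (h v* A)"
    by (simp add: inner_vector_matrix_mult)
  finally show ?thesis
    by (simp add: qf_gradient_def inner_axis' matrix_vector_mult_add_rdistrib)
qed

lemma quadratic_form_along_line:
  fixes A :: "real ^ 'n ^ 'n"
  shows "(x + t *\<^sub>R h) \<bullet> (A *v (x + t *\<^sub>R h)) =
    x \<bullet> (A *v x) + t * (x \<bullet> qf_gradient A h) + t\<^sup>2 * (h \<bullet> (A *v h))"
  using inner_vector_matrix_mult[of x h A]
  by (simp add: qf_gradient_def matrix_vector_right_distrib matrix_vector_mult_scaleR
      matrix_vector_mult_add_rdistrib inner_add_left inner_add_right power2_eq_square
      algebra_simps)

lemma inner_qf_gradient_self: "h \<bullet> qf_gradient A h = 2 * (h \<bullet> (A *v h))"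
  by (simp add: qf_gradient_def matrix_vector_mult_add_rdistrib inner_add_right
      inner_vector_matrix_mult)

lemma qf_gradient_uminus: "qf_gradient A (- h) = - qf_gradient A h"
  by (simp add: qf_gradient_def vec_eq_iff matrix_vector_mult_def sum_negf)

lemma uminus_H_plane: "h \<in> H_plane \<Longrightarrow> - h \<in> H_plane"
  by (simp add: H_plane_def sum_negf)

lemma sum_line_H_plane:
  assumes "h \<in> H_plane"
  shows "(\<Sum>i\<in>UNIV. (x + t *\<^sub>R h) $ i) = (\<Sum>i\<in>UNIV. x $ i)"
  using assms by (simp add: H_plane_def sum.distrib sum_distrib_left[symmetric])

lemma open_simplex_line_eventually:
  assumes "x \<in> open_simplex" and "h \<in> H_plane"
  shows "\<forall>\<^sub>F t in nhds 0. x + t *\<^sub>R h \<in> closed_simplex"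
proof -
  have "\<forall>\<^sub>F t in nhds 0. 0 < x $ i + t * h $ i" for i
  proof (rule order_tendstoD)
    show "((\<lambda>t. x $ i + t * h $ i) \<longlongrightarrow> x $ i) (nhds 0)"
      by (auto intro!: tendsto_eq_intros filterlim_ident)
    show "0 < x $ i"
      using assms(1) by (simp add: open_simplex_def)
  qed
  then have "\<forall>\<^sub>F t in nhds 0. \<forall>i. 0 < x $ i + t * h $ i"
    by (rule eventually_all_finite)
  then show ?thesis
  proof (rule eventually_mono)
    fix t
    assume "\<forall>i. 0 < x $ i + t * h $ i"
    then show "x + t *\<^sub>R h \<in> closed_simplex"
      using assms(1) sum_line_H_plane[OF assms(2), of x t]
      by (auto simp: open_simplex_def closed_simplex_def less_imp_le)
  qed
qed

lemma H_plane_nonzero_has_neg_coord: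
  assumes "h \<in> H_plane" and "h \<noteq> 0"
  obtains k where "h $ k < 0"
proof -
  have "\<not> (\<forall>i. 0 \<le> h $ i)"
  proof
    assume "\<forall>i. 0 \<le> h $ i"
    with assms(1) have "\<forall>i. h $ i = 0"
      by (simp add: H_plane_def sum_nonneg_eq_0_iff)
    with assms(2) show False
      by (simp add: vec_eq_iff)
  qed
  with that show thesis
    by (auto simp: not_le)
qed

lemma line_exits_closed_simplex:
  assumes x: "x \<in> closed_simplex" and h: "h \<in> H_plane" "h \<noteq> 0"
  obtains r where "x + r *\<^sub>R h \<in> closed_simplex - open_simplex"
proof -
  define S where "S = {i. h $ i < 0}"
  define r where "r = Min ((\<lambda>i. x $ i / - h $ i) ` S)"
  obtain k where "h $ k < 0"
    using H_plane_nonzero_has_neg_coord[OF h] .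
  then have "S \<noteq> {}"
    by (auto simp: S_def)
  then have "r \<in> (\<lambda>i. x $ i / - h $ i) ` S"
    unfolding r_def by (intro Min_in) (simp_all add: S_def)
  then obtain j where j: "j \<in> S" "r = x $ j / - h $ j"
    by blast
  have x_nonneg: "0 \<le> x $ i" for i
    using x by (simp add: closed_simplex_def)
  have "0 \<le> r"
    using j x_nonneg[of j] by (simp add: S_def divide_nonneg_neg)
  have "0 \<le> x $ i + r * h $ i" for i
  proof (cases "i \<in> S")
    case True
    then have "r \<le> x $ i / - h $ i"
      by (simp add: r_def)
    moreover have "0 < - h $ i"
      using True by (simp add: S_def)
    ultimately have "r * - h $ i \<le> x $ i"
      by (metis pos_le_divide_eq)
    then show ?thesis
      by simp
  next
    case False
    then show ?thesis
      using \<open>0 \<le> r\<close> x_nonneg[of i] by (simp add: S_def)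
  qed
  moreover have "x $ j + r * h $ j = 0"
    using j by (simp add: S_def field_simps)
  ultimately have "x + r *\<^sub>R h \<in> closed_simplex - open_simplex"
    using x sum_line_H_plane[OF h(1), of x r]
    by (auto simp: closed_simplex_def open_simplex_def intro!: exI[of _ j])
  then show ?thesis ..
qed

lemma simplex_min_orthogonal_qf_gradient:
  fixes A :: "real ^ 'n ^ 'n"
  assumes f: "\<And>x. f x = x \<bullet> (A *v x)"
    and x0: "x0 \<in> open_simplex" and min: "\<forall>x\<in>closed_simplex. f x0 \<le> f x"
    and h: "h \<in> H_plane"
  shows "x0 \<bullet> qf_gradient A h = 0"
proof -
  define q where "q t = f x0 + t * (x0 \<bullet> qf_gradient A h) + t\<^sup>2 * f h" for t
  have q_line: "f (x0 + t *\<^sub>R h) = q t" for t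
    by (simp add: f q_def quadratic_form_along_line)
  have "DERIV q 0 :> x0 \<bullet> qf_gradient A h"
    unfolding q_def by (auto intro!: derivative_eq_intros)
  moreover obtain d where "d > 0" "\<forall>t. dist t 0 < d \<longrightarrow> x0 + t *\<^sub>R h \<in> closed_simplex"
    using open_simplex_line_eventually[OF x0 h] by (auto simp: eventually_nhds_metric)
  then have "\<forall>t. \<bar>0 - t\<bar> < d \<longrightarrow> q 0 \<le> q t"
    using min q_line[symmetric] q_line[of 0] by (auto simp: dist_real_def)
  ultimately show ?thesis
    using DERIV_local_min \<open>d > 0\<close> by blast
qed

lemma inner_pos_nonneg_eq_0_imp_zero:
  fixes x c :: "real ^ 'n"
  assumes "\<forall>i. 0 < x $ i" and "\<forall>i. 0 \<le> c $ i" and "x \<bullet> c = 0"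
  shows "c = 0"
proof -
  have "\<forall>i. x $ i * c $ i = 0"
    using assms by (simp add: inner_vec_def sum_nonneg_eq_0_iff less_imp_le)
  then show ?thesis
    using assms(1) by (simp add: vec_eq_iff) (metis less_irrefl)
qed

lemma P_faithful_qf_gradient_not_nonneg:
  fixes A :: "real ^ 'n ^ 'n"
  assumes f: "\<And>x. f x = x \<bullet> (A *v x)" and "P_faithful f"
    and h: "h \<in> H_plane" "h \<noteq> 0"
  shows "\<not> (\<forall>i. 0 \<le> qf_gradient A h $ i)"
proof
  assume grad_nonneg: "\<forall>i. 0 \<le> qf_gradient A h $ i"
  obtain x0 where x0: "x0 \<in> closed_simplex" and min: "\<forall>x\<in>closed_simplex. f x0 \<le> f x"
    and boundary: "\<forall>x\<in>closed_simplex - open_simplex. f x0 < f x"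
    using \<open>P_faithful f\<close> unfolding P_faithful_def by blast
  have x0_open: "x0 \<in> open_simplex"
    using x0 boundary by fastforce
  have "x0 \<bullet> qf_gradient A h = 0"
    using simplex_min_orthogonal_qf_gradient[OF f x0_open min h(1)] .
  then have grad_zero: "qf_gradient A h = 0"
    using inner_pos_nonneg_eq_0_imp_zero grad_nonneg x0_open
    by (auto simp: open_simplex_def)
  then have "f h = 0"
    using inner_qf_gradient_self[of h A] by (simp add: f)
  with grad_zero have line_constant: "f (x0 + r *\<^sub>R h) = f x0" for r
    by (simp add: f quadratic_form_along_line)
  obtain r where "x0 + r *\<^sub>R h \<in> closed_simplex - open_simplex"
    using line_exits_closed_simplex[OF x0 h] .
  with boundary have "f x0 < f (x0 + r *\<^sub>R h)"
    by blast
  then show False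
    by (simp add: line_constant)
qed

theorem corollary2:
  fixes f :: "real ^ 'n \<Rightarrow> real"
  assumes "quadratic_form f" and "P_faithful f"
  shows "antimonotonous f"
proof -
  obtain A :: "real ^ 'n ^ 'n" where f: "\<And>x. f x = x \<bullet> (A *v x)"
    using assms(1) unfolding quadratic_form_def by blast
  have "h \<notin> C_set f" for h
  proof
    assume "h \<in> C_set f"
    then have h: "h \<in> H_plane" "h \<noteq> 0"
      and "(\<forall>i. qf_gradient A h $ i \<le> 0) \<or> (\<forall>i. 0 \<le> qf_gradient A h $ i)"
      by (auto simp: C_set_def partial_deriv_quadratic_form[OF f])
    moreover have "- h \<in> H_plane" "- h \<noteq> 0"
      using h by (auto simp: uminus_H_plane)
    ultimately show False
      using P_faithful_qf_gradient_not_nonneg[OF f assms(2)]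
      by (fastforce simp: qf_gradient_uminus)
  qed
  then show ?thesis
    unfolding antimonotonous_def by blast
qed

end
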